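(* Let $g$ be a real $M\times M$ matrix, $g\neq 0$, all of whose singular values are equal (i.e. the largest singular value has multiplicity $d=M$). Then there exist finite-dimensional Hilbert spaces $\mathcal H_1,\mathcal H_2$, a state $\rho$ on $\mathcal H_1\otimes\mathcal H_2$ and observables $\mathcal A_i(x)$, $x=1,\dots,M$ (Hermitian, eigenvalues in $[-1,1]$) with $\sum_{x_1,x_2=1}^M g_{x_1,x_2}\operatorname{tr}(\rho\,\mathcal A_1(x_1)\otimes\mathcal A_2(x_2))=M\,\|g\|_2$; i.e. the bound $\sqrt{M_1M_2}\|g\|_2$ of Theorem 1 is attained.
   Context: $\|g\|_2$ denotes the largest singular value of $g$. *)

theory Defs
  imports "Jordan_Normal_Form.Char_Poly"
begin

definition herm :: "nat \<Rightarrow> complex mat \<Rightarrow> bool" where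
  "herm n A \<longleftrightarrow> A \<in> carrier_mat n n \<and>
     (\<forall>i<n. \<forall>j<n. A $$ (j, i) = cnj (A $$ (i, j)))"

definition observable :: "nat \<Rightarrow> complex mat \<Rightarrow> bool" where
  "observable n A \<longleftrightarrow> herm n A \<and>
     (\<forall>k. eigenvalue A k \<longrightarrow> Im k = 0 \<and> -1 \<le> Re k \<and> Re k \<le> 1)"

definition mtrace :: "complex mat \<Rightarrow> complex" where
  "mtrace A = (\<Sum>i<dim_row A. A $$ (i, i))"

definition density :: "nat \<Rightarrow> complex mat \<Rightarrow> bool" where
  "density n \<rho> \<longleftrightarrow> herm n \<rho> \<and>
     (\<forall>k. eigenvalue \<rho> k \<longrightarrow> Im k = 0 \<and> 0 \<le> Re k) \<and> mtrace \<rho> = 1"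

definition kron :: "complex mat \<Rightarrow> complex mat \<Rightarrow> complex mat" where
  "kron A B = mat (dim_row A * dim_row B) (dim_col A * dim_col B)
     (\<lambda>(i, j). A $$ (i div dim_row B, j div dim_col B) * B $$ (i mod dim_row B, j mod dim_col B))"

definition singular_value :: "real mat \<Rightarrow> real \<Rightarrow> bool" where
  "singular_value g s \<longleftrightarrow> 0 \<le> s \<and> eigenvalue (transpose_mat g * g) (s\<^sup>2)"

definition norm2 :: "real mat \<Rightarrow> real" where
  "norm2 g = Max {s. singular_value g s}"

end

theory Submission
  imports Defs "Jordan_Normal_Form.Schur_Decomposition"
begin

text \<open>If \<open>\<sigma>\<close> is the only singular value of \<open>g\<close>, then \<open>g\<^sup>T g = \<sigma>\<^sup>2 I\<close>: the real symmetric matrix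
  \<open>g\<^sup>T g - \<sigma>\<^sup>2 I\<close> has \<open>0\<close> as its only eigenvalue, so by Schur triangularisation its square has
  trace \<open>0\<close>, and that trace is the sum of the squares of its entries. Hence the columns
  \<open>b\<^sub>y = (g\<^sub>x\<^sub>y / \<sigma>)\<^sub>x\<close> are unit vectors (and \<open>\<sigma> \<noteq> 0\<close> as \<open>g \<noteq> 0\<close>).

  Let \<open>\<Gamma>\<^sub>1, \<dots>, \<Gamma>\<^sub>M\<close> be pairwise anticommuting real symmetric involutions on \<open>\<complex>\<^sup>d\<close>, \<open>d = 2\<^sup>M\<close>
  (Jordan--Wigner). Alice measures \<open>\<Gamma>\<^sub>x\<close>, Bob measures \<open>B\<^sub>y = \<Sum>\<^sub>x (b\<^sub>y)\<^sub>x \<Gamma>\<^sub>x\<close>, which is again an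
  involution because \<open>b\<^sub>y\<close> is a unit vector, and they share the maximally entangled state \<open>\<Phi>\<close>.
  Then \<open>\<langle>\<Phi>| \<Gamma>\<^sub>x \<otimes> B\<^sub>y |\<Phi>\<rangle> = tr (\<Gamma>\<^sub>x\<^sup>T B\<^sub>y) / d = g\<^sub>x\<^sub>y / \<sigma>\<close> by trace orthogonality of the \<open>\<Gamma>\<^sub>x\<close>, and the
  Bell expression becomes \<open>\<Sum>\<^sub>x\<^sub>,\<^sub>y g\<^sub>x\<^sub>y\<^sup>2 / \<sigma> = M \<sigma>\<close>.\<close>

section \<open>Kronecker products and traces\<close>

lemma sum_lessThan_mult_nat:
  fixes a b :: nat
  shows "(\<Sum>c<a * b. f c) = (\<Sum>p<a. \<Sum>q<b. (f (p * b + q) :: 'a::comm_monoid_add))"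
proof (induction a)
  case (Suc a)
  have "(\<Sum>c<n + m. f c) = (\<Sum>c<n. f c) + (\<Sum>q<m. f (n + q))" for n m :: nat
    by (induction m) (simp_all add: add.assoc)
  from this[of "a * b" b] show ?case using Suc by (simp add: add.commute)
qed simp

lemma mult_add_less_mult_nat:
  assumes "p < (a::nat)" "q < b"
  shows "p * b + q < a * b"
proof -
  have "p * b + q < Suc p * b" using assms(2) by simp
  also have "\<dots> \<le> a * b" using assms(1) by (intro mult_le_mono1) simp
  finally show ?thesis .
qed

lemma div_mod_less_of_less_mult_nat:
  "i < a * (b::nat) \<Longrightarrow> i div b < a \<and> i mod b < b"
  by (cases "b = 0") (simp_all add: less_mult_imp_div_less)

lemma mult_add_eq_mult_add_iff_nat:
  assumes "q < (b::nat)" "s < b"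
  shows "p * b + q = r * b + s \<longleftrightarrow> p = r \<and> q = s"
proof
  assume "p * b + q = r * b + s"
  then have "(p * b + q) div b = (r * b + s) div b" "(p * b + q) mod b = (r * b + s) mod b"
    by simp_all
  with assms show "p = r \<and> q = s" by simp
qed simp

lemma index_kron_div_mod:
  assumes "A \<in> carrier_mat a a'" "B \<in> carrier_mat b b'" "i < a * b" "j < a' * b'"
  shows "kron A B $$ (i, j) = A $$ (i div b, j div b') * B $$ (i mod b, j mod b')"
  using assms by (simp add: kron_def)

lemma index_kron [simp]:
  assumes "A \<in> carrier_mat a a'" "B \<in> carrier_mat b b'"
    and "p < a" "q < b" "r < a'" "s < b'"
  shows "kron A B $$ (p * b + q, r * b' + s) = A $$ (p, r) * B $$ (q, s)"
  using assms by (simp add: index_kron_div_mod mult_add_less_mult_nat)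

lemma dim_kron [simp]:
  "dim_row (kron A B) = dim_row A * dim_row B" "dim_col (kron A B) = dim_col A * dim_col B"
  by (simp_all add: kron_def)

lemma kron_carrier_mat [simp]:
  "A \<in> carrier_mat a a' \<Longrightarrow> B \<in> carrier_mat b b' \<Longrightarrow> kron A B \<in> carrier_mat (a * b) (a' * b')"
  by (simp add: kron_def)

lemma eq_mat_blockI:
  assumes "A \<in> carrier_mat (a * b) (a' * b')" "B \<in> carrier_mat (a * b) (a' * b')"
    and "\<And>p q r s. p < a \<Longrightarrow> q < b \<Longrightarrow> r < a' \<Longrightarrow> s < b' \<Longrightarrow>
           A $$ (p * b + q, r * b' + s) = B $$ (p * b + q, r * b' + s)"
  shows "A = B"
proof (rule eq_matI)
  fix i j assume "i < dim_row B" "j < dim_col B"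
  with assms(2) have "i < a * b" "j < a' * b'" by auto
  with assms(3)[of "i div b" "i mod b" "j div b'" "j mod b'"]
  show "A $$ (i, j) = B $$ (i, j)"
    by (simp add: div_mod_less_of_less_mult_nat)
qed (use assms in auto)

lemma kron_mult:
  assumes "A \<in> carrier_mat a a" "C \<in> carrier_mat a a" "B \<in> carrier_mat b b" "D \<in> carrier_mat b b"
  shows "kron A B * kron C D = kron (A * C) (B * D)"
proof (rule eq_mat_blockI)
  fix p q r s assume ind: "p < a" "q < b" "r < a" "s < b"
  have "(kron A B * kron C D) $$ (p * b + q, r * b + s)
      = (\<Sum>k<a * b. kron A B $$ (p * b + q, k) * kron C D $$ (k, r * b + s))"
    using assms ind by (simp add: scalar_prod_def lessThan_atLeast0 mult_add_less_mult_nat)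
  also have "\<dots> = (\<Sum>k<a. \<Sum>l<b. (A $$ (p, k) * B $$ (q, l)) * (C $$ (k, r) * D $$ (l, s)))"
    unfolding sum_lessThan_mult_nat using assms ind by (intro sum.cong refl) simp
  also have "\<dots> = (\<Sum>k<a. A $$ (p, k) * C $$ (k, r)) * (\<Sum>l<b. B $$ (q, l) * D $$ (l, s))"
    by (simp add: sum_product ac_simps)
  also have "\<dots> = (A * C) $$ (p, r) * (B * D) $$ (q, s)"
    using assms ind by (simp add: scalar_prod_def lessThan_atLeast0)
  finally show "(kron A B * kron C D) $$ (p * b + q, r * b + s) = kron (A * C) (B * D) $$ (p * b + q, r * b + s)"
    using assms ind by (simp add: index_kron[of "A * C" a a "B * D" b b])
qed (use assms in auto)

lemma kron_one: "kron (1\<^sub>m a) (1\<^sub>m b) = 1\<^sub>m (a * b)"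
  by (rule eq_mat_blockI[of _ a b a b])
    (simp_all add: index_kron[of _ a a _ b b] mult_add_less_mult_nat mult_add_eq_mult_add_iff_nat)

lemma kron_smult_left:
  "A \<in> carrier_mat a a' \<Longrightarrow> B \<in> carrier_mat b b' \<Longrightarrow> kron (c \<cdot>\<^sub>m A) B = c \<cdot>\<^sub>m kron A B"
  by (rule eq_mat_blockI[of _ a b a' b'])
    (simp_all add: index_kron[of "c \<cdot>\<^sub>m A" a a' B b b'] mult_add_less_mult_nat)

lemma kron_smult_right:
  "A \<in> carrier_mat a a' \<Longrightarrow> B \<in> carrier_mat b b' \<Longrightarrow> kron A (c \<cdot>\<^sub>m B) = c \<cdot>\<^sub>m kron A B"
  by (rule eq_mat_blockI[of _ a b a' b'])
    (simp_all add: index_kron[of A a a' "c \<cdot>\<^sub>m B" b b'] mult_add_less_mult_nat)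

lemma transpose_kron:
  "A \<in> carrier_mat a a' \<Longrightarrow> B \<in> carrier_mat b b' \<Longrightarrow>
    transpose_mat (kron A B) = kron (transpose_mat A) (transpose_mat B)"
  by (rule eq_mat_blockI[of _ a' b' a b]) (simp_all add: mult_add_less_mult_nat)

lemma herm_kron:
  assumes "herm a A" "herm b B"
  shows "herm (a * b) (kron A B)"
proof -
  from assms have A: "A \<in> carrier_mat a a" and B: "B \<in> carrier_mat b b"
    and hA: "\<And>i j. i < a \<Longrightarrow> j < a \<Longrightarrow> A $$ (j, i) = cnj (A $$ (i, j))"
    and hB: "\<And>i j. i < b \<Longrightarrow> j < b \<Longrightarrow> B $$ (j, i) = cnj (B $$ (i, j))"
    unfolding herm_def by blast+
  show ?thesis
    unfolding herm_def
  proof (intro conjI allI impI)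
    fix i j assume "i < a * b" "j < a * b"
    with div_mod_less_of_less_mult_nat[OF this(1)] div_mod_less_of_less_mult_nat[OF this(2)]
    show "kron A B $$ (j, i) = cnj (kron A B $$ (i, j))"
      by (simp add: index_kron_div_mod[OF A B] hA[of "i div b" "j div b"] hB[of "i mod b" "j mod b"])
  qed (use A B in simp)
qed

lemma kron_anticommute_left:
  assumes "A \<in> carrier_mat a a" "C \<in> carrier_mat a a" "B \<in> carrier_mat b b" "D \<in> carrier_mat b b"
    and "A * C = (-1) \<cdot>\<^sub>m (C * A)" "B * D = D * B"
  shows "kron A B * kron C D = (-1) \<cdot>\<^sub>m (kron C D * kron A B)"
  using assms by (simp add: kron_mult kron_smult_left[of "C * A" a a "D * B" b b])

lemma kron_anticommute_right:
  assumes "A \<in> carrier_mat a a" "C \<in> carrier_mat a a" "B \<in> carrier_mat b b" "D \<in> carrier_mat b b"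
    and "A * C = C * A" "B * D = (-1) \<cdot>\<^sub>m (D * B)"
  shows "kron A B * kron C D = (-1) \<cdot>\<^sub>m (kron C D * kron A B)"
  using assms by (simp add: kron_mult kron_smult_right[of "C * A" a a "D * B" b b])

lemma mtrace_mult_comm:
  assumes "A \<in> carrier_mat n m" "B \<in> carrier_mat m n"
  shows "mtrace (A * B) = mtrace (B * A)"
proof -
  have "mtrace (A * B) = (\<Sum>i<n. \<Sum>k<m. A $$ (i, k) * B $$ (k, i))"
    unfolding mtrace_def using assms by (simp add: scalar_prod_def lessThan_atLeast0)
  also have "\<dots> = (\<Sum>k<m. \<Sum>i<n. B $$ (k, i) * A $$ (i, k))"
    by (subst sum.swap) (simp add: mult.commute)
  also have "\<dots> = mtrace (B * A)"
    unfolding mtrace_def using assms by (simp add: scalar_prod_def lessThan_atLeast0)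
  finally show ?thesis .
qed

lemma mtrace_similar:
  assumes "similar_mat A B"
  shows "mtrace A = mtrace B"
proof -
  from similar_matD[OF assms] obtain n P Q where carrier: "{A, B, P, Q} \<subseteq> carrier_mat n n"
    and QP: "Q * P = 1\<^sub>m n" and A: "A = P * B * Q"
    by blast
  then have "mtrace A = mtrace (Q * (P * B))"
    using mtrace_mult_comm[of "P * B" n n Q] mult_carrier_mat[of P n n B n] by simp
  also have "Q * (P * B) = B"
    using carrier QP by (auto simp: assoc_mult_mat[of Q n n P n B n, symmetric])
  finally show ?thesis .
qed

lemma mtrace_smult: "A \<in> carrier_mat n n \<Longrightarrow> mtrace (c \<cdot>\<^sub>m A) = c * mtrace A"
  by (simp add: mtrace_def sum_distrib_left)

lemma mtrace_one: "mtrace (1\<^sub>m n) = of_nat n"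
  by (simp add: mtrace_def)

lemma mtrace_anticommute:
  assumes "A \<in> carrier_mat n n" "B \<in> carrier_mat n n" "A * B = (-1) \<cdot>\<^sub>m (B * A)"
  shows "mtrace (A * B) = 0"
proof -
  have "mtrace (A * B) = - mtrace (B * A)"
    using assms by (simp add: mtrace_smult[of "B * A" n])
  with mtrace_mult_comm[OF assms(1,2)] show ?thesis by simp
qed

lemma herm_one: "herm n (1\<^sub>m n)"
  by (simp add: herm_def)

section \<open>Clifford generators\<close>

definition pauli_x :: "complex mat" where
  "pauli_x = mat 2 2 (\<lambda>(i, j). if i = j then 0 else 1)"

definition pauli_z :: "complex mat" where
  "pauli_z = mat 2 2 (\<lambda>(i, j). if i \<noteq> j then 0 else if i = 0 then 1 else -1)"

lemma pauli_carrier_mat [simp]: "pauli_x \<in> carrier_mat 2 2" "pauli_z \<in> carrier_mat 2 2"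
  by (simp_all add: pauli_x_def pauli_z_def)

lemma pauli_mult:
  "pauli_x * pauli_x = 1\<^sub>m 2" "pauli_z * pauli_z = 1\<^sub>m 2"
  "pauli_x * pauli_z = (-1) \<cdot>\<^sub>m (pauli_z * pauli_x)"
  "pauli_z * pauli_x = (-1) \<cdot>\<^sub>m (pauli_x * pauli_z)"
  by (rule eq_matI;
      auto simp: pauli_x_def pauli_z_def scalar_prod_def less_2_cases_iff numeral_2_eq_2)+

lemma herm_pauli: "herm 2 pauli_x" "herm 2 pauli_z"
  by (auto simp: herm_def pauli_x_def pauli_z_def less_2_cases_iff)

lemma transpose_pauli: "transpose_mat pauli_x = pauli_x" "transpose_mat pauli_z = pauli_z"
  by (rule eq_matI; auto simp: pauli_x_def pauli_z_def)+

text \<open>Jordan--Wigner representation of the Clifford algebra on \<open>m\<close> generators: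
  \<open>\<Gamma>\<^sub>k = Z \<otimes> \<dots> \<otimes> Z \<otimes> X \<otimes> 1 \<otimes> \<dots> \<otimes> 1\<close> with \<open>m - 1 - k\<close> leading factors \<open>Z\<close>.\<close>

fun clifford_gen :: "nat \<Rightarrow> nat \<Rightarrow> complex mat" where
  "clifford_gen 0 k = 1\<^sub>m 1"
| "clifford_gen (Suc m) k =
     (if k < m then kron pauli_z (clifford_gen m k) else kron pauli_x (1\<^sub>m (2 ^ m)))"

lemma clifford_gen_carrier_mat [simp]: "clifford_gen m k \<in> carrier_mat (2 ^ m) (2 ^ m)"
  by (induction m) auto

lemma herm_clifford_gen: "herm (2 ^ m) (clifford_gen m k)"
  by (induction m) (auto simp: herm_one herm_pauli herm_kron)

lemma transpose_clifford_gen: "transpose_mat (clifford_gen m k) = clifford_gen m k"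
proof (induction m)
  case (Suc m)
  note transpose_kron[OF pauli_carrier_mat(1) one_carrier_mat]
    transpose_kron[OF pauli_carrier_mat(2) clifford_gen_carrier_mat]
  with Suc show ?case by (simp add: transpose_pauli)
qed simp

lemma clifford_gen_square: "k < m \<Longrightarrow> clifford_gen m k * clifford_gen m k = 1\<^sub>m (2 ^ m)"
proof (induction m)
  case (Suc m)
  note kron_mult[OF pauli_carrier_mat(1) pauli_carrier_mat(1) one_carrier_mat one_carrier_mat]
    kron_mult[OF pauli_carrier_mat(2) pauli_carrier_mat(2) clifford_gen_carrier_mat clifford_gen_carrier_mat]
  with Suc show ?case by (auto simp: pauli_mult kron_one)
qed simp

lemma clifford_gen_anticommute:
  "k < m \<Longrightarrow> l < m \<Longrightarrow> k \<noteq> l \<Longrightarrow>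
    clifford_gen m k * clifford_gen m l = (-1) \<cdot>\<^sub>m (clifford_gen m l * clifford_gen m k)"
proof (induction m)
  case (Suc m)
  have Z: "pauli_z * pauli_z = pauli_z * pauli_z" and
    one: "clifford_gen m j * 1\<^sub>m (2 ^ m) = 1\<^sub>m (2 ^ m) * clifford_gen m j" for j
    by (simp_all add: right_mult_one_mat[OF clifford_gen_carrier_mat] left_mult_one_mat[OF clifford_gen_carrier_mat])
  consider "k < m" "l < m" | "k < m" "l = m" | "k = m" "l < m"
    using Suc.prems by linarith
  then show ?case
  proof cases
    case 1
    with kron_anticommute_right[OF pauli_carrier_mat(2) pauli_carrier_mat(2)
        clifford_gen_carrier_mat clifford_gen_carrier_mat Z Suc.IH[OF 1 Suc.prems(3)]]
    show ?thesis by simp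
  next
    case 2
    with kron_anticommute_left[OF pauli_carrier_mat(2) pauli_carrier_mat(1)
        clifford_gen_carrier_mat one_carrier_mat pauli_mult(4) one]
    show ?thesis by simp
  next
    case 3
    with kron_anticommute_left[OF pauli_carrier_mat(1) pauli_carrier_mat(2)
        one_carrier_mat clifford_gen_carrier_mat pauli_mult(3) one[symmetric]]
    show ?thesis by simp
  qed
qed simp

lemma mtrace_clifford_gen_mult:
  assumes "k < m" "l < m"
  shows "mtrace (clifford_gen m k * clifford_gen m l) = (if k = l then 2 ^ m else 0)"
  using assms clifford_gen_square[of k m]
    mtrace_anticommute[OF clifford_gen_carrier_mat clifford_gen_carrier_mat clifford_gen_anticommute]
  by (cases "k = l") (simp_all add: mtrace_one)

lemma smult_vec_cancel:
  fixes a b :: "'a::field"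
  assumes "v \<in> carrier_vec n" "v \<noteq> 0\<^sub>v n" "a \<cdot>\<^sub>v v = b \<cdot>\<^sub>v v"
  shows "a = b"
proof -
  from assms(1,2) obtain i where i: "i < n" "v $ i \<noteq> 0"
    by (metis eq_vecI carrier_vecD index_zero_vec)
  with assms have "a * v $ i = b * v $ i"
    by (metis carrier_vecD index_smult_vec(1))
  with i show ?thesis by simp
qed

lemma eigenvalue_square:
  fixes A :: "'a::field mat"
  assumes "A \<in> carrier_mat n n" "eigenvalue A k"
  obtains v where "v \<in> carrier_vec n" "v \<noteq> 0\<^sub>v n" "A *\<^sub>v v = k \<cdot>\<^sub>v v" "(A * A) *\<^sub>v v = k\<^sup>2 \<cdot>\<^sub>v v"
proof -
  from assms obtain v where v: "eigenvector A v k"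
    unfolding eigenvalue_def by blast
  have "A * A = A ^\<^sub>m 2"
    using assms(1) by (simp add: numeral_2_eq_2)
  with eigenvector_pow[OF assms(1) v, of 2] v assms(1) show ?thesis
    by (intro that) (auto simp: eigenvector_def)
qed

lemma eigenvalue_involution:
  fixes A :: "'a::field mat"
  assumes "A \<in> carrier_mat n n" "A * A = 1\<^sub>m n" "eigenvalue A k"
  shows "k = 1 \<or> k = -1"
proof -
  from eigenvalue_square[OF assms(1,3)] obtain v where
    v: "v \<in> carrier_vec n" "v \<noteq> 0\<^sub>v n" and "(A * A) *\<^sub>v v = k\<^sup>2 \<cdot>\<^sub>v v" .
  with assms(2) have "k\<^sup>2 \<cdot>\<^sub>v v = 1 \<cdot>\<^sub>v v" by simp
  with v have "k\<^sup>2 = 1" by (intro smult_vec_cancel)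
  then show ?thesis by (simp add: power2_eq_1_iff)
qed

lemma eigenvalue_idempotent:
  fixes A :: "'a::field mat"
  assumes "A \<in> carrier_mat n n" "A * A = A" "eigenvalue A k"
  shows "k = 0 \<or> k = 1"
proof -
  from eigenvalue_square[OF assms(1,3)] obtain v where
    v: "v \<in> carrier_vec n" "v \<noteq> 0\<^sub>v n" and "A *\<^sub>v v = k \<cdot>\<^sub>v v" "(A * A) *\<^sub>v v = k\<^sup>2 \<cdot>\<^sub>v v" .
  with assms(2) have "k\<^sup>2 \<cdot>\<^sub>v v = k \<cdot>\<^sub>v v" by simp
  with v have "k\<^sup>2 = k" by (intro smult_vec_cancel)
  then show ?thesis by (simp add: power2_eq_square)
qed

lemma observable_of_herm_involution:
  assumes "herm n A" "A * A = 1\<^sub>m n"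
  shows "observable n A"
  using assms eigenvalue_involution[of A n] unfolding observable_def herm_def by fastforce

lemma density_of_herm_projection:
  assumes "herm n \<rho>" "\<rho> * \<rho> = \<rho>" "mtrace \<rho> = 1"
  shows "density n \<rho>"
  using assms eigenvalue_idempotent[of \<rho> n] unfolding density_def herm_def by fastforce

text \<open>The projection onto \<open>\<Phi> = d\<^sup>-\<^sup>1\<^sup>/\<^sup>2 \<Sum>\<^sub>i e\<^sub>i \<otimes> e\<^sub>i\<close>: the basis vector \<open>e\<^sub>p \<otimes> e\<^sub>q\<close> has index \<open>p * d + q\<close>.\<close>

definition max_entangled :: "nat \<Rightarrow> complex mat" where
  "max_entangled d = mat (d * d) (d * d)
     (\<lambda>(i, j). if i div d = i mod d \<and> j div d = j mod d then 1 / of_nat d else 0)"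

lemma dim_max_entangled [simp]:
  "dim_row (max_entangled d) = d * d" "dim_col (max_entangled d) = d * d"
  by (simp_all add: max_entangled_def)

lemma index_max_entangled:
  "i < d * d \<Longrightarrow> j < d * d \<Longrightarrow>
    max_entangled d $$ (i, j) = (if i div d = i mod d \<and> j div d = j mod d then 1 / of_nat d else 0)"
  by (simp add: max_entangled_def)

lemma max_entangled_idempotent:
  assumes "0 < d"
  shows "max_entangled d * max_entangled d = max_entangled d"
proof (rule eq_matI)
  fix i j assume "i < dim_row (max_entangled d)" "j < dim_col (max_entangled d)"
  then have ij: "i < d * d" "j < d * d" by simp_all
  define c :: complex
    where "c = (if i div d = i mod d \<and> j div d = j mod d then 1 / of_nat d * (1 / of_nat d) else 0)"
  have "(max_entangled d * max_entangled d) $$ (i, j)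
      = (\<Sum>p<d. \<Sum>q<d. max_entangled d $$ (i, p * d + q) * max_entangled d $$ (p * d + q, j))"
    using ij by (simp add: scalar_prod_def atLeast0LessThan sum_lessThan_mult_nat)
  also have "\<dots> = (\<Sum>p<d. \<Sum>q<d. if q = p then c else 0)"
    using ij by (intro sum.cong refl) (auto simp: c_def index_max_entangled mult_add_less_mult_nat)
  also have "\<dots> = max_entangled d $$ (i, j)"
    using ij assms by (simp add: c_def index_max_entangled)
  finally show "(max_entangled d * max_entangled d) $$ (i, j) = max_entangled d $$ (i, j)" .
qed simp_all

lemma density_max_entangled:
  assumes "0 < d"
  shows "density (d * d) (max_entangled d)"
proof (rule density_of_herm_projection)
  show "herm (d * d) (max_entangled d)"
    by (simp add: herm_def max_entangled_def)
  show "max_entangled d * max_entangled d = max_entangled d"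
    using assms by (rule max_entangled_idempotent)
  have "mtrace (max_entangled d) = (\<Sum>p<d. \<Sum>q<d. max_entangled d $$ (p * d + q, p * d + q))"
    by (simp add: mtrace_def sum_lessThan_mult_nat)
  also have "\<dots> = (\<Sum>p<d. \<Sum>q<d. if q = p then 1 / of_nat d else 0)"
    by (intro sum.cong refl) (auto simp: index_max_entangled mult_add_less_mult_nat)
  also have "\<dots> = 1" using assms by simp
  finally show "mtrace (max_entangled d) = 1" .
qed

lemma mtrace_max_entangled_kron:
  assumes "A \<in> carrier_mat d d" "B \<in> carrier_mat d d"
  shows "mtrace (max_entangled d * kron A B) = mtrace (transpose_mat A * B) / of_nat d"
proof -
  have "mtrace (max_entangled d * kron A B)
      = (\<Sum>p<d. \<Sum>q<d. \<Sum>r<d. \<Sum>s<d.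
           max_entangled d $$ (p * d + q, r * d + s) * kron A B $$ (r * d + s, p * d + q))"
    using assms by (simp add: mtrace_def scalar_prod_def atLeast0LessThan mult_add_less_mult_nat
        sum_lessThan_mult_nat)
  also have "\<dots> = (\<Sum>p<d. \<Sum>q<d. \<Sum>r<d. \<Sum>s<d.
                     if s = r then if q = p then A $$ (r, p) * B $$ (r, p) / of_nat d else 0 else 0)"
    using assms by (intro sum.cong refl) (auto simp: index_max_entangled mult_add_less_mult_nat)
  also have "\<dots> = (\<Sum>p<d. \<Sum>q<d. \<Sum>r<d. if q = p then A $$ (r, p) * B $$ (r, p) / of_nat d else 0)"
    by simp
  also have "\<dots> = (\<Sum>p<d. \<Sum>r<d. \<Sum>q<d. if q = p then A $$ (r, p) * B $$ (r, p) / of_nat d else 0)"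
    by (rule sum.cong[OF refl], rule sum.swap)
  also have "\<dots> = (\<Sum>p<d. \<Sum>r<d. A $$ (r, p) * B $$ (r, p) / of_nat d)"
    by simp
  also have "\<dots> = mtrace (transpose_mat A * B) / of_nat d"
    using assms by (simp add: mtrace_def scalar_prod_def atLeast0LessThan sum_divide_distrib)
  finally show ?thesis .
qed

definition lincomb_mat :: "nat \<Rightarrow> nat \<Rightarrow> (nat \<Rightarrow> real) \<Rightarrow> (nat \<Rightarrow> complex mat) \<Rightarrow> complex mat" where
  "lincomb_mat n m c A = mat n n (\<lambda>(i, j). \<Sum>x<m. complex_of_real (c x) * A x $$ (i, j))"

lemma lincomb_mat_carrier_mat [simp]: "lincomb_mat n m c A \<in> carrier_mat n n"
  and dim_lincomb_mat [simp]: "dim_row (lincomb_mat n m c A) = n" "dim_col (lincomb_mat n m c A) = n"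
  by (simp_all add: lincomb_mat_def)

lemma herm_lincomb_mat:
  assumes "\<And>x. x < m \<Longrightarrow> herm n (A x)"
  shows "herm n (lincomb_mat n m c A)"
  unfolding herm_def
proof (intro conjI allI impI)
  fix i j assume ij: "i < n" "j < n"
  have h: "A x $$ (j, i) = cnj (A x $$ (i, j))" if "x < m" for x
    using assms[OF that] ij unfolding herm_def by blast
  have "lincomb_mat n m c A $$ (j, i) = (\<Sum>x<m. complex_of_real (c x) * A x $$ (j, i))"
    using ij by (simp add: lincomb_mat_def)
  also have "\<dots> = (\<Sum>x<m. complex_of_real (c x) * cnj (A x $$ (i, j)))"
    by (intro sum.cong refl) (simp add: h)
  also have "\<dots> = cnj (lincomb_mat n m c A $$ (i, j))"
    using ij by (simp add: lincomb_mat_def)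
  finally show "lincomb_mat n m c A $$ (j, i) = cnj (lincomb_mat n m c A $$ (i, j))" .
qed simp

lemma index_mult_lincomb_mat:
  assumes carrier: "\<And>x. x < m \<Longrightarrow> A x \<in> carrier_mat n n" and ij: "i < n" "j < n"
  shows "(lincomb_mat n m c A * lincomb_mat n m c A) $$ (i, j)
    = (\<Sum>x<m. \<Sum>y<m. complex_of_real (c x * c y) * (A x * A y) $$ (i, j))"
proof -
  have "(lincomb_mat n m c A * lincomb_mat n m c A) $$ (i, j)
      = (\<Sum>k<n. (\<Sum>x<m. complex_of_real (c x) * A x $$ (i, k)) * (\<Sum>y<m. complex_of_real (c y) * A y $$ (k, j)))"
    using ij by (simp add: lincomb_mat_def scalar_prod_def atLeast0LessThan)
  also have "\<dots> = (\<Sum>k<n. \<Sum>x<m. \<Sum>y<m. complex_of_real (c x * c y) * (A x $$ (i, k) * A y $$ (k, j)))"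
    unfolding sum_product by (intro sum.cong refl) (simp add: mult_ac)
  also have "\<dots> = (\<Sum>x<m. \<Sum>y<m. \<Sum>k<n. complex_of_real (c x * c y) * (A x $$ (i, k) * A y $$ (k, j)))"
    by (subst sum.swap, rule sum.cong[OF refl], rule sum.swap)
  also have "\<dots> = (\<Sum>x<m. \<Sum>y<m. complex_of_real (c x * c y) * (A x * A y) $$ (i, j))"
  proof (intro sum.cong refl)
    fix x y assume "x \<in> {..<m}" "y \<in> {..<m}"
    with carrier have "A x \<in> carrier_mat n n" "A y \<in> carrier_mat n n" by simp_all
    with ij show "(\<Sum>k<n. complex_of_real (c x * c y) * (A x $$ (i, k) * A y $$ (k, j)))
        = complex_of_real (c x * c y) * (A x * A y) $$ (i, j)"
      by (simp add: scalar_prod_def atLeast0LessThan sum_distrib_left)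
  qed
  finally show ?thesis .
qed

text \<open>The cross terms cancel in pairs by anticommutation.\<close>

lemma lincomb_mat_square:
  assumes carrier: "\<And>x. x < m \<Longrightarrow> A x \<in> carrier_mat n n"
    and square: "\<And>x. x < m \<Longrightarrow> A x * A x = 1\<^sub>m n"
    and anticommute: "\<And>x y. x < m \<Longrightarrow> y < m \<Longrightarrow> x \<noteq> y \<Longrightarrow> A x * A y = (-1) \<cdot>\<^sub>m (A y * A x)"
  shows "lincomb_mat n m c A * lincomb_mat n m c A = complex_of_real (\<Sum>x<m. (c x)\<^sup>2) \<cdot>\<^sub>m 1\<^sub>m n"
proof (rule eq_matI)
  fix i j assume "i < dim_row (complex_of_real (\<Sum>x<m. (c x)\<^sup>2) \<cdot>\<^sub>m 1\<^sub>m n)"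
    "j < dim_col (complex_of_real (\<Sum>x<m. (c x)\<^sup>2) \<cdot>\<^sub>m 1\<^sub>m n)"
  then have ij: "i < n" "j < n" by simp_all
  define P where "P x y = (A x * A y) $$ (i, j)" for x y
  define \<delta> :: complex where "\<delta> = (if i = j then 1 else 0)"
  define S where "S = (\<Sum>x<m. \<Sum>y<m. complex_of_real (c x * c y) * P x y)"
  have anti: "P x y + P y x = (if x = y then 2 * \<delta> else 0)" if xy: "x < m" "y < m" for x y
  proof (cases "x = y")
    case True
    with square[OF xy(1)] ij show ?thesis by (simp add: P_def \<delta>_def)
  next
    case False
    from carrier[OF xy(1)] carrier[OF xy(2)] have "A y * A x \<in> carrier_mat n n" by simp
    with anticommute[OF xy False] ij False carrier_matD[OF this] show ?thesis by (simp add: P_def)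
  qed
  have "S = (\<Sum>x<m. \<Sum>y<m. complex_of_real (c x * c y) * P y x)"
    unfolding S_def by (subst sum.swap) (simp add: mult.commute)
  then have "2 * S = (\<Sum>x<m. \<Sum>y<m. complex_of_real (c x * c y) * (P x y + P y x))"
    unfolding S_def by (simp add: distrib_left sum.distrib)
  also have "\<dots> = (\<Sum>x<m. \<Sum>y<m. if y = x then complex_of_real (c x * c y) * (2 * \<delta>) else 0)"
    by (intro sum.cong refl) (simp add: anti)
  also have "\<dots> = 2 * (\<delta> * complex_of_real (\<Sum>x<m. (c x)\<^sup>2))"
    by (simp add: power2_eq_square sum_distrib_left sum_distrib_right ac_simps)
  finally have "S = \<delta> * complex_of_real (\<Sum>x<m. (c x)\<^sup>2)"
    by simp
  moreover have "(lincomb_mat n m c A * lincomb_mat n m c A) $$ (i, j) = S"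
    unfolding S_def P_def by (rule index_mult_lincomb_mat[OF carrier ij])
  ultimately show "(lincomb_mat n m c A * lincomb_mat n m c A) $$ (i, j)
    = (complex_of_real (\<Sum>x<m. (c x)\<^sup>2) \<cdot>\<^sub>m 1\<^sub>m n) $$ (i, j)"
    using ij by (simp add: \<delta>_def)
qed simp_all

lemma mtrace_mult_lincomb_mat:
  assumes B: "B \<in> carrier_mat n n" and carrier: "\<And>x. x < m \<Longrightarrow> A x \<in> carrier_mat n n"
  shows "mtrace (B * lincomb_mat n m c A) = (\<Sum>x<m. complex_of_real (c x) * mtrace (B * A x))"
proof -
  have "mtrace (B * lincomb_mat n m c A)
      = (\<Sum>i<n. \<Sum>k<n. \<Sum>x<m. complex_of_real (c x) * (B $$ (i, k) * A x $$ (k, i)))"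
    using B by (simp add: mtrace_def lincomb_mat_def scalar_prod_def atLeast0LessThan
        sum_distrib_left mult_ac)
  also have "\<dots> = (\<Sum>x<m. \<Sum>i<n. \<Sum>k<n. complex_of_real (c x) * (B $$ (i, k) * A x $$ (k, i)))"
    by (subst sum.swap, rule sum.cong[OF refl], rule sum.swap)
  also have "\<dots> = (\<Sum>x<m. complex_of_real (c x) * mtrace (B * A x))"
  proof (rule sum.cong[OF refl])
    fix x assume "x \<in> {..<m}"
    with carrier have "A x \<in> carrier_mat n n" by simp
    with B show "(\<Sum>i<n. \<Sum>k<n. complex_of_real (c x) * (B $$ (i, k) * A x $$ (k, i)))
        = complex_of_real (c x) * mtrace (B * A x)"
      by (simp add: mtrace_def scalar_prod_def atLeast0LessThan sum_distrib_left)
  qed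
  finally show ?thesis .
qed

section \<open>Real symmetric matrices with a single eigenvalue\<close>

lemma herm_eigenvalue_real:
  assumes "herm n A" "eigenvalue A e"
  shows "Im e = 0"
proof -
  from assms obtain v where v: "v \<in> carrier_vec n" "v \<noteq> 0\<^sub>v n" and Av: "A *\<^sub>v v = e \<cdot>\<^sub>v v"
    unfolding eigenvalue_def eigenvector_def herm_def by auto
  from assms(1) have A: "A \<in> carrier_mat n n"
    and hA: "\<And>i j. i < n \<Longrightarrow> j < n \<Longrightarrow> A $$ (j, i) = cnj (A $$ (i, j))"
    unfolding herm_def by blast+
  define q where "q = (\<Sum>i<n. \<Sum>j<n. cnj (v $ i) * A $$ (i, j) * v $ j)"
  have row: "(\<Sum>j<n. A $$ (i, j) * v $ j) = e * v $ i" if "i < n" for i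
    using arg_cong[OF Av, of "\<lambda>w. w $ i"] that v A by (simp add: scalar_prod_def atLeast0LessThan)
  have "q = (\<Sum>i<n. cnj (v $ i) * (\<Sum>j<n. A $$ (i, j) * v $ j))"
    unfolding q_def by (simp add: sum_distrib_left mult.assoc)
  also have "\<dots> = e * (\<Sum>i<n. v $ i * cnj (v $ i))"
    by (simp add: row sum_distrib_left mult.left_commute mult.commute[of "cnj _"])
  also have "\<dots> = e * complex_of_real (\<Sum>i<n. (cmod (v $ i))\<^sup>2)"
    by (simp only: of_real_sum complex_norm_square)
  finally have q: "q = e * complex_of_real (\<Sum>i<n. (cmod (v $ i))\<^sup>2)" .
  have "cnj q = (\<Sum>i<n. \<Sum>j<n. cnj (v $ j) * A $$ (j, i) * v $ i)"
    unfolding q_def cnj_sum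
  proof (intro sum.cong refl)
    fix i j assume "i \<in> {..<n}" "j \<in> {..<n}"
    then show "cnj (cnj (v $ i) * A $$ (i, j) * v $ j) = cnj (v $ j) * A $$ (j, i) * v $ i"
      by (simp add: hA[of i j])
  qed
  also have "\<dots> = q"
    unfolding q_def by (rule sum.swap)
  finally have "Im q = 0"
    by (metis cnj.simps(2) neg_equal_zero)
  moreover from v obtain i where "i < n" "v $ i \<noteq> 0"
    by (metis eq_vecI carrier_vecD index_zero_vec)
  then have "0 < (\<Sum>i<n. (cmod (v $ i))\<^sup>2)"
    by (intro sum_pos2[of _ i]) auto
  ultimately show ?thesis
    using q by simp
qed

lemma mtrace_square_upper_triangular:
  assumes "B \<in> carrier_mat n n" "upper_triangular B"
  shows "mtrace (B * B) = (\<Sum>i<n. (B $$ (i, i))\<^sup>2)"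
proof -
  have "mtrace (B * B) = (\<Sum>i<n. \<Sum>k<n. B $$ (i, k) * B $$ (k, i))"
    unfolding mtrace_def using assms(1) by (simp add: scalar_prod_def atLeast0LessThan)
  also have "\<dots> = (\<Sum>i<n. \<Sum>k<n. if k = i then (B $$ (i, i))\<^sup>2 else 0)"
  proof (intro sum.cong refl)
    fix i k assume "i \<in> {..<n}" "k \<in> {..<n}"
    then have "i < dim_row B" "k < dim_row B" using assms(1) by auto
    consider "k = i" | "k < i" | "i < k" by linarith
    then show "B $$ (i, k) * B $$ (k, i) = (if k = i then (B $$ (i, i))\<^sup>2 else 0)"
      by cases (simp_all add: power2_eq_square upper_triangularD[OF assms(2)] \<open>i < dim_row B\<close> \<open>k < dim_row B\<close>)
  qed
  finally show ?thesis by simp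
qed

lemma mtrace_square_eq_0_of_eigenvalues_0:
  fixes A :: "complex mat"
  assumes A: "A \<in> carrier_mat n n" and ev: "\<And>e. eigenvalue A e \<Longrightarrow> e = 0"
  shows "mtrace (A * A) = 0"
proof -
  obtain es where es: "char_poly A = (\<Prod>e\<leftarrow>es. [:- e, 1:])"
    using char_poly_factorized[OF A] by blast
  obtain B P Q where "schur_decomposition A es = (B, P, Q)"
    by (metis prod_cases3)
  from schur_decomposition[OF A es this] have sim: "similar_mat_wit A B P Q"
    and B: "upper_triangular B" "diag_mat B = es" by auto
  from similar_mat_witD2[OF A sim] have BP: "B \<in> carrier_mat n n" "A * A = P * (B * B) * Q"
    using similar_mat_wit_pow_id[OF sim, of 2] by (simp_all add: numeral_2_eq_2)
  have "B $$ (i, i) = 0" if "i < n" for i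
  proof (rule ev)
    have "B $$ (i, i) \<in> set es" using B(2) BP(1) that by (auto simp: diag_mat_def)
    then show "eigenvalue A (B $$ (i, i))"
      using eigenvalue_root_char_poly[OF A] es linear_poly_root by simp
  qed
  then have "mtrace (B * B) = 0"
    using mtrace_square_upper_triangular[OF BP(1) B(1)] by simp
  moreover have "similar_mat (A * A) (B * B)"
    using similar_mat_wit_pow[OF sim, of 2] A BP(1) unfolding similar_mat_def
    by (auto simp: numeral_2_eq_2)
  ultimately show ?thesis
    using mtrace_similar by simp
qed

lemma real_symmetric_eq_0_of_eigenvalues_0:
  fixes T :: "real mat"
  assumes T: "T \<in> carrier_mat n n" and sym: "transpose_mat T = T"
    and ev: "\<And>\<mu>. eigenvalue T \<mu> \<Longrightarrow> \<mu> = 0"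
  shows "T = 0\<^sub>m n n"
proof -
  let ?Tc = "map_mat complex_of_real T"
  have Tc: "?Tc \<in> carrier_mat n n" using T by simp
  have symT: "T $$ (j, i) = T $$ (i, j)" if "i < n" "j < n" for i j
    using arg_cong[OF sym, of "\<lambda>A. A $$ (i, j)"] T that by simp
  have "herm n ?Tc"
    unfolding herm_def
  proof (intro conjI allI impI)
    fix i j assume "i < n" "j < n"
    with T symT[of i j] show "?Tc $$ (j, i) = cnj (?Tc $$ (i, j))" by simp
  qed (use T in simp)
  have "e = 0" if "eigenvalue ?Tc e" for e
  proof -
    have "Im e = 0" by (rule herm_eigenvalue_real[OF \<open>herm n ?Tc\<close> that])
    then obtain r where e: "e = complex_of_real r"
      by (metis complex_is_Real_iff Reals_cases)
    have "complex_of_real (poly (char_poly T) r) = poly (char_poly ?Tc) e"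
      unfolding of_real_hom.char_poly_hom[OF T] e by simp
    also have "\<dots> = 0"
      using that eigenvalue_root_char_poly[OF Tc] by simp
    finally have "eigenvalue T r"
      using eigenvalue_root_char_poly[OF T] by simp
    with ev e show ?thesis by simp
  qed
  then have "mtrace (?Tc * ?Tc) = 0"
    by (rule mtrace_square_eq_0_of_eigenvalues_0[OF Tc])
  moreover have "mtrace (?Tc * ?Tc) = complex_of_real (\<Sum>i<n. \<Sum>k<n. T $$ (i, k) * T $$ (k, i))"
    using T by (simp add: mtrace_def scalar_prod_def atLeast0LessThan)
  ultimately have "(\<Sum>i<n. \<Sum>k<n. T $$ (i, k) * T $$ (k, i)) = 0"
    by (simp only: of_real_eq_0_iff)
  moreover have "(\<Sum>i<n. \<Sum>k<n. T $$ (i, k) * T $$ (k, i)) = (\<Sum>i<n. \<Sum>k<n. (T $$ (i, k))\<^sup>2)"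
  proof (intro sum.cong refl)
    fix i k assume "i \<in> {..<n}" "k \<in> {..<n}"
    then show "T $$ (i, k) * T $$ (k, i) = (T $$ (i, k))\<^sup>2"
      using symT[of k i] by (simp add: power2_eq_square)
  qed
  ultimately have "(\<Sum>i<n. \<Sum>k<n. (T $$ (i, k))\<^sup>2) = 0"
    by simp
  then have "\<forall>i\<in>{..<n}. (\<Sum>k<n. (T $$ (i, k))\<^sup>2) = 0"
    by (subst (asm) sum_nonneg_eq_0_iff) (simp_all add: sum_nonneg)
  then have "T $$ (i, k) = 0" if "i < n" "k < n" for i k
    using that by (simp add: sum_nonneg_eq_0_iff)
  with T show ?thesis
    by (intro eq_matI) simp_all
qed

lemma eigenvalue_minus_smult_one:
  fixes A :: "'a::field mat"
  assumes "A \<in> carrier_mat n n"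
  shows "eigenvalue (A - c \<cdot>\<^sub>m 1\<^sub>m n) \<mu> \<longleftrightarrow> eigenvalue A (\<mu> + c)"
proof -
  have "char_matrix (A - c \<cdot>\<^sub>m 1\<^sub>m n) \<mu> = char_matrix A (\<mu> + c)"
    using assms by (intro eq_matI) (auto simp: char_matrix_def)
  moreover have "A - c \<cdot>\<^sub>m 1\<^sub>m n \<in> carrier_mat n n"
    by (simp add: minus_carrier_mat)
  ultimately show ?thesis
    by (simp add: eigenvalue_char_matrix[OF assms] eigenvalue_char_matrix[of "A - _"])
qed

lemma eigenvalue_transpose_mult_self_nonneg:
  fixes g :: "real mat"
  assumes g: "g \<in> carrier_mat m n" and ev: "eigenvalue (transpose_mat g * g) l"
  shows "0 \<le> l"
proof -
  from ev g obtain v where v: "v \<in> carrier_vec n" "v \<noteq> 0\<^sub>v n"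
    and gv: "(transpose_mat g * g) *\<^sub>v v = l \<cdot>\<^sub>v v"
    unfolding eigenvalue_def eigenvector_def by auto
  have "l * (v \<bullet>c v) = (transpose_mat g *\<^sub>v (g *\<^sub>v v)) \<bullet> v"
    using g v gv by (simp add: conjugate_vec_def assoc_mult_mat_vec[of _ n m _ n])
  also have "\<dots> = (g *\<^sub>v v) \<bullet>c (g *\<^sub>v v)"
    using g v by (simp add: conjugate_vec_def transpose_vec_mult_scalar)
  finally have "0 \<le> l * (v \<bullet>c v)"
    by (metis conjugate_square_ge_0_vec)
  moreover have "0 < v \<bullet>c v"
    using v by (metis conjugate_square_greater_0_vec)
  ultimately show ?thesis
    by (simp add: zero_le_mult_iff)
qed

text \<open>An eigenvalue \<open>\<mu>\<close> of \<open>g\<^sup>T g - \<sigma>\<^sup>2 I\<close> gives the eigenvalue \<open>\<mu> + \<sigma>\<^sup>2 \<ge> 0\<close> of \<open>g\<^sup>T g\<close>,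
  hence the singular value \<open>\<surd>(\<mu> + \<sigma>\<^sup>2) = \<sigma>\<close>.\<close>

lemma transpose_mult_self_of_unique_singular_value:
  assumes g: "g \<in> carrier_mat n n" and sv: "\<And>s. singular_value g s \<longleftrightarrow> s = \<sigma>"
  shows "transpose_mat g * g = \<sigma>\<^sup>2 \<cdot>\<^sub>m 1\<^sub>m n"
proof -
  define T where "T = transpose_mat g * g - \<sigma>\<^sup>2 \<cdot>\<^sub>m 1\<^sub>m n"
  have gg: "transpose_mat g * g \<in> carrier_mat n n" using g by simp
  have T: "T \<in> carrier_mat n n" by (simp add: T_def minus_carrier_mat)
  have "transpose_mat (\<sigma>\<^sup>2 \<cdot>\<^sub>m 1\<^sub>m n) = \<sigma>\<^sup>2 \<cdot>\<^sub>m 1\<^sub>m n"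
    by (rule eq_matI) auto
  with g have "transpose_mat T = T"
    by (simp add: T_def transpose_minus[of _ n n] transpose_mult[of _ n n] gg)
  moreover have "\<mu> = 0" if "eigenvalue T \<mu>" for \<mu>
  proof -
    have ev: "eigenvalue (transpose_mat g * g) (\<mu> + \<sigma>\<^sup>2)"
      using that eigenvalue_minus_smult_one[OF gg] by (simp add: T_def)
    then have nonneg: "0 \<le> \<mu> + \<sigma>\<^sup>2"
      by (rule eigenvalue_transpose_mult_self_nonneg[OF g])
    with ev have "singular_value g (sqrt (\<mu> + \<sigma>\<^sup>2))"
      by (simp add: singular_value_def)
    then have "sqrt (\<mu> + \<sigma>\<^sup>2) = \<sigma>" by (simp add: sv)
    with nonneg show "\<mu> = 0" by (metis real_sqrt_pow2 add_cancel_left_left)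
  qed
  ultimately have "T = 0\<^sub>m n n"
    by (rule real_symmetric_eq_0_of_eigenvalues_0[OF T])
  show ?thesis
  proof (rule eq_matI)
    fix i j assume "i < dim_row (\<sigma>\<^sup>2 \<cdot>\<^sub>m 1\<^sub>m n)" "j < dim_col (\<sigma>\<^sup>2 \<cdot>\<^sub>m 1\<^sub>m n)"
    with gg arg_cong[OF \<open>T = 0\<^sub>m n n\<close>, of "\<lambda>A. A $$ (i, j)"]
    show "(transpose_mat g * g) $$ (i, j) = (\<sigma>\<^sup>2 \<cdot>\<^sub>m 1\<^sub>m n) $$ (i, j)"
      by (simp add: T_def)
  qed (use g in simp_all)
qed

lemma observable_clifford_gen: "k < m \<Longrightarrow> observable (2 ^ m) (clifford_gen m k)"
  by (simp add: observable_of_herm_involution herm_clifford_gen clifford_gen_square)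

lemma observable_lincomb_clifford_gen:
  assumes "(\<Sum>x<m. (c x)\<^sup>2) = 1"
  shows "observable (2 ^ m) (lincomb_mat (2 ^ m) m c (clifford_gen m))"
proof (rule observable_of_herm_involution)
  show "herm (2 ^ m) (lincomb_mat (2 ^ m) m c (clifford_gen m))"
    by (rule herm_lincomb_mat) (rule herm_clifford_gen)
  show "lincomb_mat (2 ^ m) m c (clifford_gen m) * lincomb_mat (2 ^ m) m c (clifford_gen m) = 1\<^sub>m (2 ^ m)"
  proof -
    have "lincomb_mat (2 ^ m) m c (clifford_gen m) * lincomb_mat (2 ^ m) m c (clifford_gen m)
        = complex_of_real (\<Sum>x<m. (c x)\<^sup>2) \<cdot>\<^sub>m 1\<^sub>m (2 ^ m)"
      by (rule lincomb_mat_square) (auto intro: clifford_gen_square clifford_gen_anticommute)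
    also have "\<dots> = 1\<^sub>m (2 ^ m)"
      by (rule eq_matI) (simp_all add: assms)
    finally show ?thesis .
  qed
qed

lemma mtrace_max_entangled_kron_clifford_gen:
  assumes "k < m"
  shows "mtrace (max_entangled (2 ^ m) * kron (clifford_gen m k) (lincomb_mat (2 ^ m) m c (clifford_gen m)))
    = complex_of_real (c k)"
proof -
  have "mtrace (max_entangled (2 ^ m) * kron (clifford_gen m k) (lincomb_mat (2 ^ m) m c (clifford_gen m)))
      = mtrace (clifford_gen m k * lincomb_mat (2 ^ m) m c (clifford_gen m)) / 2 ^ m"
    by (simp add: mtrace_max_entangled_kron transpose_clifford_gen)
  also have "\<dots> = (\<Sum>x<m. complex_of_real (c x) * mtrace (clifford_gen m k * clifford_gen m x)) / 2 ^ m"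
    by (simp add: mtrace_mult_lincomb_mat)
  also have "\<dots> = complex_of_real (c k)"
    using assms by (simp add: mtrace_clifford_gen_mult if_distrib cong: if_cong)
  finally show ?thesis .
qed

lemma column_norm_of_unique_singular_value:
  assumes "g \<in> carrier_mat n n" "\<And>s. singular_value g s \<longleftrightarrow> s = \<sigma>" "y < n"
  shows "(\<Sum>x<n. (g $$ (x, y))\<^sup>2) = \<sigma>\<^sup>2"
  using arg_cong[OF transpose_mult_self_of_unique_singular_value[OF assms(1,2)], of "\<lambda>A. A $$ (y, y)"] assms
  by (simp add: scalar_prod_def atLeast0LessThan power2_eq_square)

lemma unique_singular_value_neq_0:
  assumes "g \<in> carrier_mat n n" "g \<noteq> 0\<^sub>m n n" "\<And>s. singular_value g s \<longleftrightarrow> s = \<sigma>"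
  shows "\<sigma> \<noteq> 0"
proof
  assume "\<sigma> = 0"
  with column_norm_of_unique_singular_value[OF assms(1,3)]
  have "g $$ (x, y) = 0" if "x < n" "y < n" for x y
    using that by (simp add: sum_nonneg_eq_0_iff)
  with assms(1,2) show False
    by (metis eq_matI carrier_matD index_zero_mat(1,2,3))
qed

lemma sum_mtrace_max_entangled_kron_clifford_gen:
  fixes g :: "real mat"
  shows "(\<Sum>x1<m. \<Sum>x2<m. complex_of_real (g $$ (x1, x2)) * mtrace (max_entangled (2 ^ m) *
      kron (clifford_gen m x1) (lincomb_mat (2 ^ m) m (\<lambda>x. g $$ (x, x2) / \<sigma>) (clifford_gen m))))
    = complex_of_real ((\<Sum>x2<m. \<Sum>x1<m. (g $$ (x1, x2))\<^sup>2) / \<sigma>)"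
  by (subst sum.swap)
    (simp add: mtrace_max_entangled_kron_clifford_gen power2_eq_square sum_divide_distrib)

theorem corollary2:
  fixes g :: "real mat" and M :: nat
  assumes "g \<in> carrier_mat M M"
    and "g \<noteq> 0\<^sub>m M M"
    and "\<exists>\<sigma>. \<forall>s. singular_value g s \<longleftrightarrow> s = \<sigma>"
  shows "\<exists>(d1::nat) (d2::nat) (\<rho>::complex mat) (A1::nat \<Rightarrow> complex mat) (A2::nat \<Rightarrow> complex mat).
           0 < d1 \<and> 0 < d2 \<and> density (d1 * d2) \<rho> \<and>
           (\<forall>x<M. observable d1 (A1 x)) \<and> (\<forall>x<M. observable d2 (A2 x)) \<and>
           (\<Sum>x1<M. \<Sum>x2<M. complex_of_real (g $$ (x1, x2)) * mtrace (\<rho> * kron (A1 x1) (A2 x2)))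
             = complex_of_real (real M * norm2 g)"
proof -
  obtain \<sigma> where sv: "\<And>s. singular_value g s \<longleftrightarrow> s = \<sigma>" using assms(3) by blast
  then have "{s. singular_value g s} = {\<sigma>}" by auto
  then have norm: "norm2 g = \<sigma>" by (simp add: norm2_def)
  note column = column_norm_of_unique_singular_value[OF assms(1) sv]
  have "\<sigma> \<noteq> 0" by (rule unique_singular_value_neq_0[OF assms(1,2) sv])
  define B where "B y = lincomb_mat (2 ^ M) M (\<lambda>x. g $$ (x, y) / \<sigma>) (clifford_gen M)" for y
  have "(\<Sum>x<M. (g $$ (x, y) / \<sigma>)\<^sup>2) = 1" if "y < M" for y
    using column[OF that] \<open>\<sigma> \<noteq> 0\<close> by (simp add: power_divide flip: sum_divide_distrib)
  then have "\<forall>y<M. observable (2 ^ M) (B y)"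
    by (simp add: B_def observable_lincomb_clifford_gen)
  moreover have "(\<Sum>x2<M. \<Sum>x1<M. (g $$ (x1, x2))\<^sup>2) / \<sigma> = real M * norm2 g"
    using \<open>\<sigma> \<noteq> 0\<close> by (simp add: column norm power2_eq_square[of \<sigma>])
  ultimately show ?thesis
    using density_max_entangled[of "2 ^ M"] observable_clifford_gen
      sum_mtrace_max_entangled_kron_clifford_gen[where m = M and g = g and \<sigma> = \<sigma>]
    by (intro exI[of _ "2 ^ M"] exI[of _ "max_entangled (2 ^ M)"] exI[of _ "clifford_gen M"]
        exI[of _ B]) (simp add: B_def)
qed

end
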